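(* Let $\phi:\mathbb{R}\to\mathbb{R}$ be differentiable, $x\in\mathbb{R}^{k_0}$ with $\|x\|_2=1$, and $a,b\in\mathbb{R}^k$ with $a^T\phi(b)=1$, and let $f(z)=xa^T\phi(bx^Tz)$ (so $f(x)=x$). Then $\lambda_1(\mathbf{J}(f(x)))=a^T(\phi'(b)\odot b)$.
   Context: $\phi,\phi'$ are applied coordinatewise; $\odot$ is the Hadamard (coordinatewise) product. $\mathbf{J}(f(x))$ is the Jacobian of $f$ at $x$ and $\lambda_1$ its top eigenvalue (eigenvalue of largest absolute value). In the paper this setting arises as the trained weights $A^{(\infty)}=xa^T$, $B^{(\infty)}=bx^T$ of a 1-hidden-layer autoencoder $A\phi(Bz)$ trained to zero error on the single example $x$. *)

theory Defs
  imports "HOL-Analysis.Analysis"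
begin

definition jacobian :: "(real^'n \<Rightarrow> real^'m) \<Rightarrow> real^'n \<Rightarrow> real^'n^'m" where
  "jacobian f x = matrix (frechet_derivative f (at x))"

definition cmat :: "real^'n^'n \<Rightarrow> complex^'n^'n" where
  "cmat M = (\<chi> i j. complex_of_real (M $ i $ j))"

definition is_eigenvalue :: "real^'n^'n \<Rightarrow> complex \<Rightarrow> bool" where
  "is_eigenvalue M c \<longleftrightarrow> (\<exists>v. v \<noteq> 0 \<and> cmat M *v v = c *s v)"

definition is_top_eigenvalue :: "real^'n^'n \<Rightarrow> complex \<Rightarrow> bool" where
  "is_top_eigenvalue M c \<longleftrightarrow> is_eigenvalue M c \<and> (\<forall>\<mu>. is_eigenvalue M \<mu> \<longrightarrow> cmod \<mu> \<le> cmod c)"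

end

theory Submission
  imports Defs
begin

text \<open>The map \<open>f\<close> has the form \<open>z \<mapsto> g(x \<bullet> z) x\<close> with \<open>g(t) = a\<^sup>T\<phi>(t b)\<close>, so its Jacobian at \<open>x\<close>
  is the rank-one matrix \<open>g'(1) x x\<^sup>T\<close>. A rank-one matrix \<open>w u\<^sup>T\<close> maps every vector into the span
  of \<open>w\<close>, so its only possible eigenvalues are \<open>0\<close> and \<open>u\<^sup>T w\<close>, and the latter is attained with
  eigenvector \<open>w\<close>. Here \<open>u\<^sup>T w = g'(1) \<parallel>x\<parallel>\<^sup>2 = a\<^sup>T(\<phi>'(b) \<odot> b)\<close>.\<close>

definition outer :: "real^'m \<Rightarrow> real^'n \<Rightarrow> real^'n^'m" where
  "outer w u = (\<chi> i j. w $ i * u $ j)"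

definition cvec :: "real^'n \<Rightarrow> complex^'n" where
  "cvec v = (\<chi> i. complex_of_real (v $ i))"

lemma cvec_eq_0_iff [simp]: "cvec v = 0 \<longleftrightarrow> v = 0"
  by (simp add: cvec_def vec_eq_iff)

lemma cmat_mult_cvec: "cmat M *v cvec v = cvec (M *v v)"
  by (simp add: cmat_def cvec_def matrix_vector_mult_def vec_eq_iff)

lemma outer_mult: "outer w u *v v = (u \<bullet> v) *\<^sub>R w"
  by (simp add: outer_def matrix_vector_mult_def inner_vec_def vec_eq_iff
      sum_distrib_left mult_ac)

lemma is_eigenvalue_outer: "is_eigenvalue (outer w u) (complex_of_real (u \<bullet> w))"
proof (cases "w = 0")
  case True
  have "cmat (outer w u) *v 1 = 0 *s 1"
    by (simp add: True outer_def cmat_def matrix_vector_mult_def vec_eq_iff)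
  then show ?thesis
    unfolding is_eigenvalue_def True by (metis inner_zero_right of_real_0 one_neq_zero)
next
  case False
  have "cmat (outer w u) *v cvec w = complex_of_real (u \<bullet> w) *s cvec w"
    unfolding cmat_mult_cvec outer_mult by (simp add: cvec_def vec_eq_iff)
  then show ?thesis
    unfolding is_eigenvalue_def using False cvec_eq_0_iff by blast
qed

lemma eigenvalue_outer_cases:
  assumes "is_eigenvalue (outer w u) \<mu>"
  shows "\<mu> = 0 \<or> \<mu> = complex_of_real (u \<bullet> w)"
proof -
  obtain v where "v \<noteq> 0" and eigen: "cmat (outer w u) *v v = \<mu> *s v"
    using assms unfolding is_eigenvalue_def by blast
  define s where "s = (\<Sum>j\<in>UNIV. complex_of_real (u $ j) * v $ j)"
  have component: "complex_of_real (w $ i) * s = \<mu> * v $ i" for i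
  proof -
    have "(cmat (outer w u) *v v) $ i = (\<mu> *s v) $ i"
      using eigen by simp
    then show ?thesis
      by (simp add: s_def outer_def cmat_def matrix_vector_mult_def sum_distrib_left mult_ac)
  qed
  show ?thesis
  proof (cases "s = 0")
    case True
    obtain i where "v $ i \<noteq> 0"
      using \<open>v \<noteq> 0\<close> by (auto simp: vec_eq_iff)
    then show ?thesis
      using component[of i] True by simp
  next
    case False
    have "\<mu> * s = (\<Sum>i\<in>UNIV. complex_of_real (u $ i) * (\<mu> * v $ i))"
      by (simp add: s_def sum_distrib_left mult_ac)
    also have "\<dots> = (\<Sum>i\<in>UNIV. complex_of_real (u $ i) * (complex_of_real (w $ i) * s))"
      by (simp add: component)
    also have "\<dots> = complex_of_real (u \<bullet> w) * s"
      by (simp add: inner_vec_def sum_distrib_left sum_distrib_right mult_ac)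
    finally show ?thesis
      using False by simp
  qed
qed

lemma is_top_eigenvalue_outer: "is_top_eigenvalue (outer w u) (complex_of_real (u \<bullet> w))"
  unfolding is_top_eigenvalue_def
  using is_eigenvalue_outer eigenvalue_outer_cases by fastforce

lemma jacobian_comp_inner_scaleR:
  assumes "(g has_real_derivative c) (at (u \<bullet> x))"
  shows "jacobian (\<lambda>z. g (u \<bullet> z) *\<^sub>R w) x = outer (c *\<^sub>R w) u"
proof -
  have "((\<lambda>z. g (u \<bullet> z)) has_derivative (\<lambda>h. c * (u \<bullet> h))) (at x)"
    using diff_chain_at[OF bounded_linear.has_derivative[OF bounded_linear_inner_right
          has_derivative_ident] assms[unfolded has_field_derivative_def]]
    by (simp add: o_def mult.commute)
  then have derivative: "((\<lambda>z. g (u \<bullet> z) *\<^sub>R w) has_derivative (\<lambda>h. (c * (u \<bullet> h)) *\<^sub>R w)) (at x)"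
    by (intro derivative_eq_intros) auto
  show ?thesis
    unfolding jacobian_def frechet_derivative_at[OF derivative, symmetric]
    by (simp add: matrix_def outer_def inner_axis vec_eq_iff mult_ac)
qed

lemma DERIV_inner_coordinatewise:
  fixes \<phi> :: "real \<Rightarrow> real" and a b :: "real^'n"
  assumes "\<forall>t. \<phi> differentiable (at t)"
  shows "((\<lambda>t. a \<bullet> (\<chi> i. \<phi> (t * b $ i))) has_real_derivative
          a \<bullet> (\<chi> i. deriv \<phi> (t * b $ i) * b $ i)) (at t)"
proof -
  have \<phi>': "(\<phi> has_real_derivative deriv \<phi> s) (at s)" for s
    using assms DERIV_deriv_iff_real_differentiable by blast
  have "((\<lambda>t. a $ i * \<phi> (t * b $ i)) has_real_derivative
          a $ i * (deriv \<phi> (t * b $ i) * b $ i)) (at t)" for i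
    by (intro DERIV_cmult DERIV_chain2[OF \<phi>']) (auto intro!: derivative_eq_intros)
  then show ?thesis
    unfolding inner_vec_def by (auto intro!: DERIV_sum)
qed

text \<open>The normalisation \<open>a\<^sup>T\<phi>(b) = 1\<close> only makes \<open>x\<close> a fixed point of \<open>f\<close>;
  the eigenvalue computation does not need it.\<close>

theorem proposition4:
  fixes \<phi> :: "real \<Rightarrow> real" and x :: "real^'k0" and a b :: "real^'k"
    and f :: "real^'k0 \<Rightarrow> real^'k0"
  assumes "\<forall>t. \<phi> differentiable (at t)"
    and "norm x = 1"
    and "a \<bullet> (\<chi> i. \<phi> (b $ i)) = 1"
    and "f = (\<lambda>z. (a \<bullet> (\<chi> i. \<phi> (((x \<bullet> z) *\<^sub>R b) $ i))) *\<^sub>R x)"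
  shows "is_top_eigenvalue (jacobian f x)
           (complex_of_real (a \<bullet> (\<chi> i. deriv \<phi> (b $ i) * b $ i)))"
proof -
  define c where "c = a \<bullet> (\<chi> i. deriv \<phi> (b $ i) * b $ i)"
  have "x \<bullet> x = 1"
    using assms(2) by (simp add: norm_eq_sqrt_inner)
  then have "((\<lambda>t. a \<bullet> (\<chi> i. \<phi> (t * b $ i))) has_real_derivative c) (at (x \<bullet> x))"
    using DERIV_inner_coordinatewise[OF assms(1), of a b 1] by (simp add: c_def)
  from jacobian_comp_inner_scaleR[OF this]
  have "jacobian f x = outer (c *\<^sub>R x) x"
    by (simp add: assms(4))
  moreover have "x \<bullet> (c *\<^sub>R x) = c"
    using \<open>x \<bullet> x = 1\<close> by simp
  ultimately show ?thesis
    using is_top_eigenvalue_outer by (metis c_def)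
qed

end
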